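(* Let $n\geqslant1$ and let $G_1,\dots,G_n$ be groups. For each $1\leqslant i\leqslant n$ let $A_i\subseteq G_i$ be a subset with a minimal complement $M_i$ in $G_i$. Then $\prod_{i=1}^nM_i$ is a minimal complement of $\prod_{i=1}^nA_i$ in $\prod_{i=1}^nG_i$.
   Context: A nonempty $W'\subseteq G$ is a complement to $W\subseteq G$ if $WW'=\{ww':w\in W,w'\in W'\}=G$; it is a minimal complement if no proper subset of $W'$ is a complement to $W$. Products of groups carry the componentwise operation. *)

theory Defs
  imports "HOL-Algebra.Algebra"
begin

definition complement :: "('a, 'm) monoid_scheme \<Rightarrow> 'a set \<Rightarrow> 'a set \<Rightarrow> bool" where
  "complement G W W' \<longleftrightarrow> W' \<noteq> {} \<and> W' \<subseteq> carrier G \<and> W <#>\<^bsub>G\<^esub> W' = carrier G"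

definition minimal_complement :: "('a, 'm) monoid_scheme \<Rightarrow> 'a set \<Rightarrow> 'a set \<Rightarrow> bool" where
  "minimal_complement G W W' \<longleftrightarrow> complement G W W' \<and> (\<forall>W''. W'' \<subset> W' \<longrightarrow> \<not> complement G W W'')"

end

theory Submission
  imports Defs
begin

text \<open>A complement M of A is minimal iff no single element can be dropped: for every x \<in> M
  some g is not in A (M - {x}). Given a tuple m in the product of the M i, pick such a g i in
  every coordinate; the tuple g then lies outside (\<Pi> A) ((\<Pi> M) - {m}), because any other tuple
  of \<Pi> M differs from m in some coordinate. Nothing here uses the group axioms or finiteness
  of the index set, so only the minimality hypotheses of the theorem are needed.\<close>

lemma set_mult_PiE_product_group:
  "(\<Pi>\<^sub>E i\<in>I. A i) <#>\<^bsub>product_group I G\<^esub> (\<Pi>\<^sub>E i\<in>I. B i) = (\<Pi>\<^sub>E i\<in>I. A i <#>\<^bsub>G i\<^esub> B i)"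
proof
  show "(\<Pi>\<^sub>E i\<in>I. A i) <#>\<^bsub>product_group I G\<^esub> (\<Pi>\<^sub>E i\<in>I. B i) \<subseteq> (\<Pi>\<^sub>E i\<in>I. A i <#>\<^bsub>G i\<^esub> B i)"
    by (fastforce simp: set_mult_def)
next
  show "(\<Pi>\<^sub>E i\<in>I. A i <#>\<^bsub>G i\<^esub> B i) \<subseteq> (\<Pi>\<^sub>E i\<in>I. A i) <#>\<^bsub>product_group I G\<^esub> (\<Pi>\<^sub>E i\<in>I. B i)"
  proof
    fix g assume g: "g \<in> (\<Pi>\<^sub>E i\<in>I. A i <#>\<^bsub>G i\<^esub> B i)"
    then have "\<forall>i\<in>I. \<exists>a\<in>A i. \<exists>b\<in>B i. g i = a \<otimes>\<^bsub>G i\<^esub> b"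
      by (auto simp: set_mult_def PiE_iff)
    then obtain a b where ab: "\<And>i. i \<in> I \<Longrightarrow> a i \<in> A i \<and> b i \<in> B i \<and> g i = a i \<otimes>\<^bsub>G i\<^esub> b i"
      by metis
    have "restrict a I \<in> (\<Pi>\<^sub>E i\<in>I. A i)" and "restrict b I \<in> (\<Pi>\<^sub>E i\<in>I. B i)"
      using ab by auto
    moreover have "g = restrict a I \<otimes>\<^bsub>product_group I G\<^esub> restrict b I"
      using g ab by (auto simp: PiE_def extensional_def)
    ultimately show "g \<in> (\<Pi>\<^sub>E i\<in>I. A i) <#>\<^bsub>product_group I G\<^esub> (\<Pi>\<^sub>E i\<in>I. B i)"
      unfolding set_mult_def by blast
  qed
qed

lemma complement_PiE:
  assumes "\<And>i. i \<in> I \<Longrightarrow> complement (G i) (A i) (M i)"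
  shows "complement (product_group I G) (\<Pi>\<^sub>E i\<in>I. A i) (\<Pi>\<^sub>E i\<in>I. M i)"
proof -
  have "(\<Pi>\<^sub>E i\<in>I. M i) \<noteq> {}"
    using assms by (auto simp: complement_def PiE_eq_empty_iff)
  moreover have "(\<Pi>\<^sub>E i\<in>I. M i) \<subseteq> carrier (product_group I G)"
    using assms by (auto simp: complement_def)
  moreover have "(\<Pi>\<^sub>E i\<in>I. A i <#>\<^bsub>G i\<^esub> M i) = (\<Pi>\<^sub>E i\<in>I. carrier (G i))"
    using assms by (intro PiE_cong) (simp add: complement_def)
  ultimately show ?thesis
    by (simp add: complement_def set_mult_PiE_product_group)
qed

lemma minimal_complement_iff:
  "minimal_complement G A M \<longleftrightarrow>
     complement G A M \<and> (\<forall>x\<in>M. \<not> carrier G \<subseteq> A <#>\<^bsub>G\<^esub> (M - {x}))"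
proof (cases "complement G A M")
  case True
  then have carrier_eq: "A <#>\<^bsub>G\<^esub> M = carrier G" and "M \<noteq> {}" "M \<subseteq> carrier G"
    by (auto simp: complement_def)
  then have "carrier G \<noteq> {}" by blast
  have mono: "A <#>\<^bsub>G\<^esub> W \<subseteq> A <#>\<^bsub>G\<^esub> W'" if "W \<subseteq> W'" for W W'
    using that by (auto simp: set_mult_def)
  have complement_subset_iff: "complement G A W \<longleftrightarrow> carrier G \<subseteq> A <#>\<^bsub>G\<^esub> W" if "W \<subseteq> M" for W
  proof
    assume "carrier G \<subseteq> A <#>\<^bsub>G\<^esub> W"
    moreover have "A <#>\<^bsub>G\<^esub> W \<subseteq> carrier G"
      using mono[OF that] carrier_eq by blast
    moreover have "W \<noteq> {}"
      using \<open>carrier G \<noteq> {}\<close> calculation by (auto simp: set_mult_def)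
    ultimately show "complement G A W"
      using that \<open>M \<subseteq> carrier G\<close> by (auto simp: complement_def)
  qed (simp add: complement_def)
  have "(\<forall>W. W \<subset> M \<longrightarrow> \<not> complement G A W) \<longleftrightarrow> (\<forall>x\<in>M. \<not> complement G A (M - {x}))"
  proof
    assume "\<forall>x\<in>M. \<not> complement G A (M - {x})"
    show "\<forall>W. W \<subset> M \<longrightarrow> \<not> complement G A W"
    proof (intro allI impI)
      fix W assume "W \<subset> M"
      then obtain x where "x \<in> M" "W \<subseteq> M - {x}" by blast
      with \<open>\<forall>x\<in>M. \<not> complement G A (M - {x})\<close> show "\<not> complement G A W"
        using complement_subset_iff mono by (meson Diff_subset order_trans)
    qed
  qed blast
  with True show ?thesis
    by (simp add: minimal_complement_def complement_subset_iff)
qed (simp add: minimal_complement_def)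

lemma carrier_product_group_not_subset_set_mult_PiE_remove:
  assumes m: "m \<in> (\<Pi>\<^sub>E i\<in>I. M i)"
    and "\<And>i. i \<in> I \<Longrightarrow> \<not> carrier (G i) \<subseteq> A i <#>\<^bsub>G i\<^esub> (M i - {m i})"
  shows "\<not> carrier (product_group I G) \<subseteq> (\<Pi>\<^sub>E i\<in>I. A i) <#>\<^bsub>product_group I G\<^esub> ((\<Pi>\<^sub>E i\<in>I. M i) - {m})"
proof
  assume covered: "carrier (product_group I G) \<subseteq> (\<Pi>\<^sub>E i\<in>I. A i) <#>\<^bsub>product_group I G\<^esub> ((\<Pi>\<^sub>E i\<in>I. M i) - {m})"
  from assms(2) have "\<forall>i\<in>I. \<exists>g. g \<in> carrier (G i) \<and> g \<notin> A i <#>\<^bsub>G i\<^esub> (M i - {m i})"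
    by blast
  then obtain h where h: "\<And>i. i \<in> I \<Longrightarrow> h i \<in> carrier (G i) \<and> h i \<notin> A i <#>\<^bsub>G i\<^esub> (M i - {m i})"
    by metis
  have "restrict h I \<in> (\<Pi>\<^sub>E i\<in>I. A i) <#>\<^bsub>product_group I G\<^esub> ((\<Pi>\<^sub>E i\<in>I. M i) - {m})"
    using h by (intro subsetD[OF covered]) auto
  then obtain a w where a: "a \<in> (\<Pi>\<^sub>E i\<in>I. A i)" and w: "w \<in> (\<Pi>\<^sub>E i\<in>I. M i)" "w \<noteq> m"
    and h_eq: "restrict h I = (\<lambda>i\<in>I. a i \<otimes>\<^bsub>G i\<^esub> w i)"
    unfolding set_mult_def mult_product_group by blast
  obtain i where i: "i \<in> I" "w i \<noteq> m i"
    using w m PiE_ext by metis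
  then have "h i = a i \<otimes>\<^bsub>G i\<^esub> w i" and "a i \<in> A i" and "w i \<in> M i - {m i}"
    using h_eq a w by (auto dest: fun_cong[where x = i])
  then have "h i \<in> A i <#>\<^bsub>G i\<^esub> (M i - {m i})"
    unfolding set_mult_def by blast
  with h i show False by blast
qed

lemma minimal_complement_PiE:
  assumes "\<And>i. i \<in> I \<Longrightarrow> minimal_complement (G i) (A i) (M i)"
  shows "minimal_complement (product_group I G) (\<Pi>\<^sub>E i\<in>I. A i) (\<Pi>\<^sub>E i\<in>I. M i)"
proof -
  have "complement (product_group I G) (\<Pi>\<^sub>E i\<in>I. A i) (\<Pi>\<^sub>E i\<in>I. M i)"
    using assms by (intro complement_PiE) (simp add: minimal_complement_iff)
  moreover have "\<not> carrier (product_group I G) \<subseteq>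
      (\<Pi>\<^sub>E i\<in>I. A i) <#>\<^bsub>product_group I G\<^esub> ((\<Pi>\<^sub>E i\<in>I. M i) - {m})"
    if "m \<in> (\<Pi>\<^sub>E i\<in>I. M i)" for m
    using that assms
    by (intro carrier_product_group_not_subset_set_mult_PiE_remove) (auto simp: minimal_complement_iff)
  ultimately show ?thesis
    unfolding minimal_complement_iff by blast
qed

theorem proposition5p1:
  fixes n :: nat and G :: "nat \<Rightarrow> ('a, 'm) monoid_scheme"
    and A M :: "nat \<Rightarrow> 'a set"
  assumes "n \<ge> 1"
    and "\<And>i. i \<in> {1..n} \<Longrightarrow> group (G i)"
    and "\<And>i. i \<in> {1..n} \<Longrightarrow> A i \<subseteq> carrier (G i)"
    and "\<And>i. i \<in> {1..n} \<Longrightarrow> minimal_complement (G i) (A i) (M i)"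
  shows "minimal_complement (product_group {1..n} G)
           (\<Pi>\<^sub>E i\<in>{1..n}. A i) (\<Pi>\<^sub>E i\<in>{1..n}. M i)"
  using assms(4) by (rule minimal_complement_PiE)

end
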